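(* Let $\mathcal{X}=\{x_1,\dots,x_N\}$ and $\mathcal{Y}=\{y_1,\dots,y_M\}$ be finite alphabets, $P_X$ a probability mass function on $\mathcal{X}$ with full support, and $U=(u_{ij})$ an $N\times M$ matrix whose $i$-th row is a permutation of $\{1,\dots,M\}$; write $u(x_i,y_j)=u_{ij}$. Fix $h^*\in\{1,\dots,M\}$ and let $\mathcal{Y}^+(h^* )=\{y_j\in\mathcal{Y}:\exists i,\ u_{ij}\ge h^*\}$. Then the optimal value of the problem $$\min_{P_{Y|X}}\ \max_{y\in\mathcal{S}_Y}\ \ell_{P_{Y|X}\times P_X}(X\to y)$$ over all mechanisms $P_{Y|X}=(p_{ij})$ with $p_{ij}=0$ whenever $u_{ij}<h^*$ and with $\mathcal{S}_Y=\mathcal{Y}^+(h^* )$ (which is attained by the mechanism $M^*(h^* )$ with $[M^*(h^* )]_{ij}=0$ if $u_{ij}<h^*$ and $\frac{1}{M-h^*+1}$ otherwise) equals $$-\log\min_{y\in\mathcal{Y}^+(h^* )}\ \sum_{x\in\mathcal{X}:\,u(x,y)\ge h^*}P_X(x).$$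
   Context: A privacy mechanism is a conditional distribution $P_{Y|X}$, written as an $N\times M$ row-stochastic matrix with $p_{ij}=P_{Y|X=x_i}(y_j)$. With $P_Y(y)=\sum_x P_X(x)P_{Y|X=x}(y)$, the output support is $\mathcal{S}_Y=\{y:P_Y(y)>0\}$ and $P_{X|Y=y}(x)=P_{Y|X=x}(y)P_X(x)/P_Y(y)$. The pointwise maximal leakage of $y\in\mathcal{S}_Y$ is $\ell_{P_{Y|X}\times P_X}(X\to y)=\log\max_{x\in\mathcal{X}}\frac{P_{X|Y=y}(x)}{P_X(x)}$. The entry $u_{ij}=k$ means that the pair $(x_i,y_j)$ yields the $k$-th lowest utility value for input $x_i$. *)

theory Defs
  imports Complex_Main
begin

text \<open>Indices are 0-based: inputs x_i with i < N, outputs y_j with j < M.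
  A mechanism is p :: nat => nat => real with p i j = P_{Y|X=x_i}(y_j).\<close>

definition mechanism :: "nat \<Rightarrow> nat \<Rightarrow> (nat \<Rightarrow> nat \<Rightarrow> real) \<Rightarrow> bool" where
  "mechanism N M p \<longleftrightarrow> (\<forall>i<N. (\<forall>j<M. 0 \<le> p i j) \<and> (\<Sum>j<M. p i j) = 1)"

definition PY :: "nat \<Rightarrow> (nat \<Rightarrow> real) \<Rightarrow> (nat \<Rightarrow> nat \<Rightarrow> real) \<Rightarrow> nat \<Rightarrow> real" where
  "PY N PX p j = (\<Sum>i<N. PX i * p i j)"

definition out_support :: "nat \<Rightarrow> nat \<Rightarrow> (nat \<Rightarrow> real) \<Rightarrow> (nat \<Rightarrow> nat \<Rightarrow> real) \<Rightarrow> nat set" where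
  "out_support N M PX p = {j. j < M \<and> PY N PX p j > 0}"

definition posterior :: "nat \<Rightarrow> (nat \<Rightarrow> real) \<Rightarrow> (nat \<Rightarrow> nat \<Rightarrow> real) \<Rightarrow> nat \<Rightarrow> nat \<Rightarrow> real" where
  "posterior N PX p j i = p i j * PX i / PY N PX p j"

definition pml :: "nat \<Rightarrow> (nat \<Rightarrow> real) \<Rightarrow> (nat \<Rightarrow> nat \<Rightarrow> real) \<Rightarrow> nat \<Rightarrow> real" where
  "pml N PX p j = ln (Max ((\<lambda>i. posterior N PX p j i / PX i) ` {..<N}))"

definition max_pml :: "nat \<Rightarrow> nat \<Rightarrow> (nat \<Rightarrow> real) \<Rightarrow> (nat \<Rightarrow> nat \<Rightarrow> real) \<Rightarrow> real" where
  "max_pml N M PX p = Max (pml N PX p ` out_support N M PX p)"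

definition Yplus :: "nat \<Rightarrow> nat \<Rightarrow> (nat \<Rightarrow> nat \<Rightarrow> nat) \<Rightarrow> nat \<Rightarrow> nat set" where
  "Yplus N M u h = {j. j < M \<and> (\<exists>i<N. h \<le> u i j)}"

definition feasible :: "nat \<Rightarrow> nat \<Rightarrow> (nat \<Rightarrow> real) \<Rightarrow> (nat \<Rightarrow> nat \<Rightarrow> nat) \<Rightarrow> nat
    \<Rightarrow> (nat \<Rightarrow> nat \<Rightarrow> real) \<Rightarrow> bool" where
  "feasible N M PX u h p \<longleftrightarrow> mechanism N M p \<and> (\<forall>i<N. \<forall>j<M. u i j < h \<longrightarrow> p i j = 0)
     \<and> out_support N M PX p = Yplus N M u h"

definition Mstar :: "nat \<Rightarrow> (nat \<Rightarrow> nat \<Rightarrow> nat) \<Rightarrow> nat \<Rightarrow> nat \<Rightarrow> nat \<Rightarrow> real" where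
  "Mstar M u h i j = (if u i j < h then 0 else 1 / real (M - h + 1))"

end

theory Submission
  imports Defs
begin

text \<open>The posterior-to-prior ratio of an output y under input x is P(y|x)/P(y), so the
  leakage of y is ln of the largest entry of column y divided by P(y). Write S(y) for the prior
  mass of the inputs x with u(x,y) \<ge> h*, the only inputs allowed to produce y. Then P(y) is at
  most S(y) times the largest entry of column y, so every feasible mechanism leaks at least
  -ln S(y) at the output y minimising S. The mechanism M*, being uniform on the admissible
  entries of each row, leaks exactly -ln S(y) at every output in its support.\<close>

definition admissible_mass :: "nat \<Rightarrow> (nat \<Rightarrow> real) \<Rightarrow> (nat \<Rightarrow> nat \<Rightarrow> nat) \<Rightarrow> nat \<Rightarrow> nat \<Rightarrow> real"
  where "admissible_mass N PX u h j = (\<Sum>i\<in>{i. i < N \<and> h \<le> u i j}. PX i)"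

lemma card_bij_betw_preimage:
  assumes "bij_betw f A C" "B \<subseteq> C"
  shows "card {x\<in>A. f x \<in> B} = card B"
proof -
  have "f ` {x\<in>A. f x \<in> B} = B"
    using assms unfolding bij_betw_def by blast
  then have "bij_betw f {x\<in>A. f x \<in> B} B"
    using bij_betw_subset[OF assms(1), of "{x\<in>A. f x \<in> B}"] by blast
  then show ?thesis
    by (rule bij_betw_same_card)
qed

lemma card_upper_level_set_of_bij:
  assumes "bij_betw f {..<M} {1..M}" "1 \<le> h"
  shows "card {j\<in>{..<M}. h \<le> f j} = Suc M - h"
proof -
  have "{j\<in>{..<M}. h \<le> f j} = {j\<in>{..<M}. f j \<in> {h..M}}"
    using assms(1) unfolding bij_betw_def by fastforce
  then show ?thesis
    using card_bij_betw_preimage[OF assms(1), of "{h..M}"] assms(2) by simp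
qed

lemma Mstar_eq: "Mstar M u h i j = (if h \<le> u i j then 1 / real (M - h + 1) else 0)"
  unfolding Mstar_def by simp

lemma mechanism_Mstar:
  assumes "\<forall>i<N. bij_betw (u i) {..<M} {1..M}" and "h \<in> {1..M}"
  shows "mechanism N M (Mstar M u h)"
  unfolding mechanism_def
proof (intro allI impI conjI)
  fix i assume "i < N"
  have "(\<Sum>j<M. Mstar M u h i j) = (\<Sum>j\<in>{j\<in>{..<M}. h \<le> u i j}. 1 / real (M - h + 1))"
    unfolding Mstar_eq by (rule sum.inter_filter[symmetric]) simp
  also have "\<dots> = real (Suc M - h) / real (M - h + 1)"
    using card_upper_level_set_of_bij assms \<open>i < N\<close> by simp
  also have "\<dots> = 1"
    using assms(2) by simp
  finally show "(\<Sum>j<M. Mstar M u h i j) = 1" .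
qed (simp add: Mstar_eq)

lemma PY_Mstar: "PY N PX (Mstar M u h) j = admissible_mass N PX u h j / real (M - h + 1)"
proof -
  have "PY N PX (Mstar M u h) j = (\<Sum>i<N. if h \<le> u i j then PX i / real (M - h + 1) else 0)"
    unfolding PY_def Mstar_eq by (intro sum.cong) auto
  also have "\<dots> = (\<Sum>i\<in>{i\<in>{..<N}. h \<le> u i j}. PX i / real (M - h + 1))"
    by (rule sum.inter_filter[symmetric]) simp
  also have "{i\<in>{..<N}. h \<le> u i j} = {i. i < N \<and> h \<le> u i j}"
    by auto
  finally show ?thesis
    unfolding admissible_mass_def by (simp add: sum_divide_distrib)
qed

lemma admissible_mass_pos_iff:
  assumes "\<forall>i<N. PX i > 0"
  shows "admissible_mass N PX u h j > 0 \<longleftrightarrow> (\<exists>i<N. h \<le> u i j)"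
proof
  assume "admissible_mass N PX u h j > 0"
  then have "{i. i < N \<and> h \<le> u i j} \<noteq> {}"
    unfolding admissible_mass_def by (metis less_irrefl sum.empty)
  then show "\<exists>i<N. h \<le> u i j" by blast
next
  assume "\<exists>i<N. h \<le> u i j"
  then obtain i where "i < N" "h \<le> u i j" by blast
  then show "admissible_mass N PX u h j > 0"
    unfolding admissible_mass_def using assms
    by (intro sum_pos2[of _ i]) (auto intro: less_imp_le)
qed

lemma out_support_Mstar:
  assumes "\<forall>i<N. PX i > 0"
  shows "out_support N M PX (Mstar M u h) = Yplus N M u h"
  unfolding out_support_def Yplus_def PY_Mstar
  using admissible_mass_pos_iff[OF assms] by (simp add: zero_less_divide_iff)

lemma feasible_Mstar:
  assumes "\<forall>i<N. PX i > 0" "\<forall>i<N. bij_betw (u i) {..<M} {1..M}" "h \<in> {1..M}"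
  shows "feasible N M PX u h (Mstar M u h)"
  unfolding feasible_def
  using mechanism_Mstar[OF assms(2,3)] out_support_Mstar[OF assms(1)] by (simp add: Mstar_def)

lemma pml_eq_ln_column_Max:
  assumes "\<forall>i<N. PX i > 0" and "PY N PX p j > 0"
  shows "pml N PX p j = ln (Max ((\<lambda>i. p i j) ` {..<N}) / PY N PX p j)"
proof -
  have "N \<noteq> 0"
    using assms(2) unfolding PY_def by (rule contrapos_pn) simp
  have "(\<lambda>i. posterior N PX p j i / PX i) ` {..<N} = (\<lambda>i. p i j / PY N PX p j) ` {..<N}"
    using assms(1) unfolding posterior_def by (intro image_cong) auto
  also have "\<dots> = (\<lambda>x. x / PY N PX p j) ` (\<lambda>i. p i j) ` {..<N}"
    by (simp add: image_image)
  finally have ratios: "(\<lambda>i. posterior N PX p j i / PX i) ` {..<N}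
      = (\<lambda>x. x / PY N PX p j) ` (\<lambda>i. p i j) ` {..<N}" .
  have "mono (\<lambda>x. x / PY N PX p j)"
    using assms(2) by (simp add: mono_def divide_right_mono)
  then have "Max ((\<lambda>i. p i j) ` {..<N}) / PY N PX p j
      = Max ((\<lambda>x. x / PY N PX p j) ` (\<lambda>i. p i j) ` {..<N})"
    using \<open>N \<noteq> 0\<close> by (intro mono_Max_commute) auto
  then show ?thesis
    unfolding pml_def ratios by simp
qed

lemma pml_Mstar:
  assumes "\<forall>i<N. PX i > 0" and "j \<in> Yplus N M u h"
  shows "pml N PX (Mstar M u h) j = - ln (admissible_mass N PX u h j)"
proof -
  define c where "c = 1 / real (M - h + 1)"
  obtain i0 where "i0 < N" "h \<le> u i0 j"
    using assms(2) unfolding Yplus_def by blast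
  have mass_pos: "admissible_mass N PX u h j > 0"
    using admissible_mass_pos_iff[OF assms(1)] \<open>i0 < N\<close> \<open>h \<le> u i0 j\<close> by blast
  have "Max ((\<lambda>i. Mstar M u h i j) ` {..<N}) = c"
  proof (rule Max_eqI)
    show "c \<in> (\<lambda>i. Mstar M u h i j) ` {..<N}"
      using \<open>i0 < N\<close> \<open>h \<le> u i0 j\<close> unfolding Mstar_eq c_def by force
  qed (auto simp: Mstar_eq c_def)
  moreover have "PY N PX (Mstar M u h) j = admissible_mass N PX u h j * c"
    unfolding PY_Mstar c_def by simp
  ultimately show ?thesis
    using pml_eq_ln_column_Max[OF assms(1)] mass_pos
    by (simp add: c_def ln_div)
qed

lemma Max_neg_ln_image:
  fixes f :: "'a \<Rightarrow> real"
  assumes "finite A" "A \<noteq> {}" "\<forall>x\<in>A. f x > 0"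
  shows "Max ((\<lambda>x. - ln (f x)) ` A) = - ln (Min (f ` A))"
proof -
  have "Min (f ` A) \<in> f ` A"
    using assms(1,2) by (intro Min_in) auto
  then obtain x0 where "x0 \<in> A" and x0_min: "Min (f ` A) = f x0"
    by blast
  show ?thesis
  proof (rule Max_eqI)
    show "- ln (Min (f ` A)) \<in> (\<lambda>x. - ln (f x)) ` A"
      using \<open>x0 \<in> A\<close> x0_min by simp
    fix y assume "y \<in> (\<lambda>x. - ln (f x)) ` A"
    then obtain x where "x \<in> A" "y = - ln (f x)" by blast
    moreover have "f x0 \<le> f x"
      using x0_min assms(1) \<open>x \<in> A\<close> by (metis Min_le finite_imageI imageI)
    ultimately show "y \<le> - ln (Min (f ` A))"
      using assms(3) \<open>x0 \<in> A\<close> x0_min by simp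
  qed (use assms(1) in simp)
qed

lemma max_pml_Mstar:
  assumes "\<forall>i<N. PX i > 0" and "Yplus N M u h \<noteq> {}"
  shows "max_pml N M PX (Mstar M u h) = - ln (Min (admissible_mass N PX u h ` Yplus N M u h))"
proof -
  have leakages: "pml N PX (Mstar M u h) ` Yplus N M u h
      = (\<lambda>j. - ln (admissible_mass N PX u h j)) ` Yplus N M u h"
    using pml_Mstar[OF assms(1)] by simp
  have "finite (Yplus N M u h)"
    unfolding Yplus_def by simp
  moreover have "\<forall>j\<in>Yplus N M u h. admissible_mass N PX u h j > 0"
    using admissible_mass_pos_iff[OF assms(1)] unfolding Yplus_def by blast
  ultimately show ?thesis
    unfolding max_pml_def out_support_Mstar[OF assms(1)] leakages
    using Max_neg_ln_image assms(2) by blast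
qed

lemma neg_ln_mass_le_pml:
  assumes PX_pos: "\<forall>i<N. PX i > 0"
    and p_vanishes: "\<forall>i<N. i \<notin> T \<longrightarrow> p i j = 0"
    and "T \<subseteq> {..<N}" and PY_pos: "PY N PX p j > 0"
  shows "- ln (sum PX T) \<le> pml N PX p j"
proof -
  define m where "m = Max ((\<lambda>i. p i j) ` {..<N})"
  have "PY N PX p j = (\<Sum>i\<in>T. PX i * p i j)"
    unfolding PY_def using p_vanishes \<open>T \<subseteq> {..<N}\<close>
    by (intro sum.mono_neutral_right) auto
  also have "\<dots> \<le> (\<Sum>i\<in>T. PX i * m)"
    using PX_pos \<open>T \<subseteq> {..<N}\<close>
    by (intro sum_mono mult_left_mono) (auto simp: m_def less_imp_le)
  also have "\<dots> = sum PX T * m"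
    by (rule sum_distrib_right[symmetric])
  finally have PY_le: "PY N PX p j \<le> sum PX T * m" .
  have "sum PX T \<ge> 0"
    using PX_pos \<open>T \<subseteq> {..<N}\<close> by (intro sum_nonneg) (auto simp: less_imp_le)
  moreover have "sum PX T \<noteq> 0"
    using PY_le PY_pos by auto
  ultimately have "sum PX T > 0"
    by simp
  with PY_le have "1 / sum PX T \<le> m / PY N PX p j"
    using PY_pos by (simp add: field_simps)
  then have "ln (1 / sum PX T) \<le> ln (m / PY N PX p j)"
    using \<open>sum PX T > 0\<close> by (intro ln_mono) simp_all
  then show ?thesis
    using pml_eq_ln_column_Max[OF PX_pos PY_pos] \<open>sum PX T > 0\<close> by (simp add: m_def ln_div)
qed

lemma max_pml_lower_bound:
  assumes PX_pos: "\<forall>i<N. PX i > 0" and "Yplus N M u h \<noteq> {}"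
    and "feasible N M PX u h p"
  shows "- ln (Min (admissible_mass N PX u h ` Yplus N M u h)) \<le> max_pml N M PX p"
proof -
  let ?S = "admissible_mass N PX u h" and ?Y = "Yplus N M u h"
  have "finite ?Y"
    unfolding Yplus_def by simp
  then have "Min (?S ` ?Y) \<in> ?S ` ?Y"
    using \<open>?Y \<noteq> {}\<close> by (intro Min_in) auto
  then obtain j0 where "j0 \<in> ?Y" and j0_min: "Min (?S ` ?Y) = ?S j0"
    by blast
  have supp: "out_support N M PX p = ?Y" and "j0 < M"
    using \<open>feasible N M PX u h p\<close> \<open>j0 \<in> ?Y\<close> unfolding feasible_def Yplus_def by auto
  have "- ln (?S j0) \<le> pml N PX p j0"
    unfolding admissible_mass_def
  proof (rule neg_ln_mass_le_pml[OF PX_pos])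
    show "PY N PX p j0 > 0"
      using supp \<open>j0 \<in> ?Y\<close> unfolding out_support_def by blast
  qed (use \<open>feasible N M PX u h p\<close> \<open>j0 < M\<close> in \<open>auto simp: feasible_def mechanism_def\<close>)
  also have "\<dots> \<le> max_pml N M PX p"
    unfolding max_pml_def supp using \<open>finite ?Y\<close> \<open>j0 \<in> ?Y\<close> by simp
  finally show ?thesis
    unfolding j0_min .
qed

theorem corollary1:
  fixes N M h :: nat and PX :: "nat \<Rightarrow> real" and u :: "nat \<Rightarrow> nat \<Rightarrow> nat"
  assumes PX_pos: "\<forall>i<N. PX i > 0"
    and PX_sum: "(\<Sum>i<N. PX i) = 1"
    and u_perm: "\<forall>i<N. bij_betw (u i) {..<M} {1..M}"
    and h_range: "h \<in> {1..M}"
  shows "feasible N M PX u h (Mstar M u h)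
    \<and> max_pml N M PX (Mstar M u h)
        = - ln (Min ((\<lambda>j. \<Sum>i\<in>{i. i < N \<and> h \<le> u i j}. PX i) ` Yplus N M u h))
    \<and> (\<forall>p. feasible N M PX u h p \<longrightarrow>
          - ln (Min ((\<lambda>j. \<Sum>i\<in>{i. i < N \<and> h \<le> u i j}. PX i) ` Yplus N M u h))
          \<le> max_pml N M PX p)"
proof -
  have "0 < N"
    using PX_sum by (cases N) auto
  then obtain j where "j < M" "u 0 j = h"
    using u_perm h_range unfolding bij_betw_def by (metis imageE lessThan_iff)
  then have "Yplus N M u h \<noteq> {}"
    using \<open>0 < N\<close> unfolding Yplus_def by auto
  then show ?thesis
    using feasible_Mstar[OF PX_pos u_perm h_range] max_pml_Mstar[OF PX_pos]
      max_pml_lower_bound[OF PX_pos]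
    unfolding admissible_mass_def[abs_def] by simp
qed

end
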